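(* Let $\mathcal R_5=\{(wx,x):w\in\{0,1\}^*,\ x\in\{0,1\}\}\subseteq\{0,1\}^*\times\{0,1\}^*$. Then $\mathcal R_5$ cannot be computed by a quantum finite state transducer with an isolated cutpoint, while it is computed by a deterministic finite state transducer.
   Context: A probabilistic finite state transducer (pfst) is a tuple $T=(Q,\Sigma_1,\Sigma_2,V,f,q_0,Q_{\rm acc},Q_{\rm rej})$ with finite state set $Q$, finite input/output alphabets $\Sigma_1,\Sigma_2$, initial state $q_0$, disjoint accepting/rejecting sets $Q_{\rm acc},Q_{\rm rej}\subseteq Q$ (the other states are non-halting). For each $a\in\Sigma_1\cup\{\ddagger,\$\}$ ($\ddagger,\$$ are end markers) there is a stochastic $Q\times Q$ matrix $V_a$ and an output function $f_a:Q\to\Sigma_2^*$; $V_\$$ puts all probability on halting states. On input $v$ the machine reads $\ddagger v\$$; in state $q$ reading $a$ it appends $f_a(q)$ to the output tape and moves to state $p$ with probability $(V_a)_{qp}$; if $p$ is accepting (rejecting) it halts and accepts with the current output (rejects). $T(w|v)$ is the probability of accepting with output $w$ on input $v$. A deterministic finite state transducer (dfst) is a pfst all of whose matrix entries are $0$ or $1$; it computes $\mathcal R$ if $T(w|v)=1$ for $(v,w)\in\mathcal R$ and $T(w|v)=0$ otherwise. A quantum finite state transducer (qfst) has the same data except that each $V_a$ is a unitary on $\ell^2(Q)$ (and $V_\$$ maps the span of non-halting states into the span of halting states). Its non-halting part is a vector $\psi=\sum_{q,w}\alpha_{qw}|q\rangle\otimes|w\rangle\in\ell^2(Q\times\Sigma_2^*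 )$, initially $|q_0\rangle\otimes|\epsilon\rangle$; reading $a$ maps it to $\psi'=\sum_{q,w}\alpha_{qw}V_a|q\rangle\otimes|wf_a(q)\rangle$ with $V_a|q\rangle=\sum_p(V_a)_{qp}|p\rangle$, after which the squared norm of the component of $\psi'$ on $\mathrm{span}(Q_{\rm acc})\otimes|x\rangle$ is added to the probability of accepting with output $x$, the squared norm of the component on $\mathrm{span}(Q_{\rm rej})\otimes\ell^2(\Sigma_2^* )$ to the rejection probability, and the computation continues with the projection onto non-halting states. $T(w|v)$ is defined analogously. $T$ computes $\mathcal R$ with isolated cutpoint if there are $0<\alpha<1$ and $\varepsilon>0$ such that for all $v,w$: $(v,w)\in\mathcal R\Rightarrow T(w|v)\ge\alpha+\varepsilon$ and $(v,w)\notin\mathcal R\Rightarrow T(w|v)\le\alpha-\varepsilon$. *)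

theory Defs
  imports Complex_Main "HOL-Library.Sublist"
begin

datatype 'a tsym = Sym 'a | LEnd | REnd

text \<open>A finite state transducer with states 0..n-1. trans a q p is the (q,p) entry
  of the matrix V_a (entries of type 'c: real for pfst/dfst, complex for qfst);
  out a q is f_a(q).\<close>
record ('a, 'b, 'c) fst =
  nstates :: nat
  trans :: "'a tsym \<Rightarrow> nat \<Rightarrow> nat \<Rightarrow> 'c"
  out :: "'a tsym \<Rightarrow> nat \<Rightarrow> 'b list"
  init :: nat
  acc :: "nat set"
  rej :: "nat set"

definition halting :: "('a, 'b, 'c) fst \<Rightarrow> nat \<Rightarrow> bool" where
  "halting T q \<longleftrightarrow> q \<in> acc T \<or> q \<in> rej T"

definition well_formed :: "('a, 'b, 'c) fst \<Rightarrow> bool" where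
  "well_formed T \<longleftrightarrow> init T < nstates T \<and> acc T \<subseteq> {..<nstates T} \<and>
     rej T \<subseteq> {..<nstates T} \<and> acc T \<inter> rej T = {}"

definition tape :: "'a list \<Rightarrow> 'a tsym list" where
  "tape v = LEnd # map Sym v @ [REnd]"

definition is_pfst :: "('a, 'b, real) fst \<Rightarrow> bool" where
  "is_pfst T \<longleftrightarrow> well_formed T \<and>
     (\<forall>a. \<forall>q<nstates T. (\<forall>p<nstates T. trans T a q p \<ge> 0) \<and>
                        (\<Sum>p<nstates T. trans T a q p) = 1) \<and>
     (\<forall>q<nstates T. \<forall>p<nstates T. \<not> halting T p \<longrightarrow> trans T REnd q p = 0)"

definition is_dfst :: "('a, 'b, real) fst \<Rightarrow> bool" where
  "is_dfst T \<longleftrightarrow> is_pfst T \<and>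
     (\<forall>a. \<forall>q<nstates T. \<forall>p<nstates T. trans T a q p = 0 \<or> trans T a q p = 1)"

text \<open>One step on configurations (state, output) \<Rightarrow> weight: reading a in state q,
  append out a q to the output, move to p with weight trans a q p.\<close>
definition pstep :: "('a, 'b, real) fst \<Rightarrow> 'a tsym \<Rightarrow> (nat \<Rightarrow> 'b list \<Rightarrow> real)
    \<Rightarrow> nat \<Rightarrow> 'b list \<Rightarrow> real" where
  "pstep T a mu p u = (\<Sum>q<nstates T.
      if suffix (out T a q) u
      then mu q (take (length u - length (out T a q)) u) * trans T a q p else 0)"

fun pacc :: "('a, 'b, real) fst \<Rightarrow> 'a tsym list \<Rightarrow> (nat \<Rightarrow> 'b list \<Rightarrow> real)
    \<Rightarrow> 'b list \<Rightarrow> real" where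
  "pacc T [] mu x = 0"
| "pacc T (a # as) mu x =
     (\<Sum>p\<in>acc T. pstep T a mu p x) +
     pacc T as (\<lambda>p u. if halting T p then 0 else pstep T a mu p u) x"

definition pprob :: "('a, 'b, real) fst \<Rightarrow> 'b list \<Rightarrow> 'a list \<Rightarrow> real" where
  "pprob T w v = pacc T (tape v) (\<lambda>q u. if q = init T \<and> u = [] then 1 else 0) w"

definition dfst_computes :: "('a, 'b, real) fst \<Rightarrow> ('a list \<times> 'b list) set \<Rightarrow> bool" where
  "dfst_computes T R \<longleftrightarrow> is_dfst T \<and>
     (\<forall>v w. pprob T w v = (if (v, w) \<in> R then 1 else 0))"

definition is_qfst :: "('a, 'b, complex) fst \<Rightarrow> bool" where
  "is_qfst T \<longleftrightarrow> well_formed T \<and>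
     (\<forall>a. \<forall>q<nstates T. \<forall>q'<nstates T.
        (\<Sum>p<nstates T. trans T a q p * cnj (trans T a q' p)) = (if q = q' then 1 else 0)) \<and>
     (\<forall>q<nstates T. \<forall>p<nstates T. \<not> halting T q \<and> \<not> halting T p \<longrightarrow> trans T REnd q p = 0)"

definition qstep :: "('a, 'b, complex) fst \<Rightarrow> 'a tsym \<Rightarrow> (nat \<Rightarrow> 'b list \<Rightarrow> complex)
    \<Rightarrow> nat \<Rightarrow> 'b list \<Rightarrow> complex" where
  "qstep T a psi p u = (\<Sum>q<nstates T.
      if suffix (out T a q) u
      then psi q (take (length u - length (out T a q)) u) * trans T a q p else 0)"

fun qacc :: "('a, 'b, complex) fst \<Rightarrow> 'a tsym list \<Rightarrow> (nat \<Rightarrow> 'b list \<Rightarrow> complex)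
    \<Rightarrow> 'b list \<Rightarrow> real" where
  "qacc T [] psi x = 0"
| "qacc T (a # as) psi x =
     (\<Sum>p\<in>acc T. (cmod (qstep T a psi p x))\<^sup>2) +
     qacc T as (\<lambda>p u. if halting T p then 0 else qstep T a psi p u) x"

definition qprob :: "('a, 'b, complex) fst \<Rightarrow> 'b list \<Rightarrow> 'a list \<Rightarrow> real" where
  "qprob T w v = qacc T (tape v) (\<lambda>q u. if q = init T \<and> u = [] then 1 else 0) w"

definition qfst_computes_isolated ::
    "('a, 'b, complex) fst \<Rightarrow> ('a list \<times> 'b list) set \<Rightarrow> bool" where
  "qfst_computes_isolated T R \<longleftrightarrow> is_qfst T \<and>
     (\<exists>\<alpha> \<epsilon>::real. 0 < \<alpha> \<and> \<alpha> < 1 \<and> \<epsilon> > 0 \<and>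
        (\<forall>v w. ((v, w) \<in> R \<longrightarrow> qprob T w v \<ge> \<alpha> + \<epsilon>) \<and>
               ((v, w) \<notin> R \<longrightarrow> qprob T w v \<le> \<alpha> - \<epsilon>)))"

definition R5 :: "(bool list \<times> bool list) set" where
  "R5 = {(w @ [x], [x]) | w x. True}"

end

theory Submission
  imports Defs "HOL-Library.FuncSet"
begin

text \<open>Only configurations whose output is a prefix of w can still end in acceptance with
  output w, and on these the (unitary) evolution of a qfst followed by the projection onto
  non-halting states does not increase the squared norm qnorm. Choose an input y after which
  this norm is within \<eta> of its infimum over all inputs; then every further input almost
  preserves it. By compactness two iterates of the block z after y x are close, and the
  parallelogram law transports this back: the vector after y x is close to its iterate after
  z^m for some m > 0. Acceptance before the right end marker only grows under extension,
  so T(w | y x z^m) \<ge> T(w | y x) - \<delta>. For R5 with x = 1, z = 0 and w = 1 the word y 1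
  must be accepted with output 1 and y 1 0^m rejected, which contradicts an isolated cutpoint.\<close>

section \<open>Norm contraction of quantum transducers\<close>

lemma orthonormal_rows_preserve_sum_cmod_square:
  fixes V :: "nat \<Rightarrow> nat \<Rightarrow> complex" and d :: "nat \<Rightarrow> complex"
  assumes "\<forall>q<n. \<forall>q'<n. (\<Sum>p<n. V q p * cnj (V q' p)) = (if q = q' then 1 else 0)"
  shows "(\<Sum>p<n. (cmod (\<Sum>q<n. d q * V q p))\<^sup>2) = (\<Sum>q<n. (cmod (d q))\<^sup>2)"
proof -
  have "complex_of_real (\<Sum>p<n. (cmod (\<Sum>q<n. d q * V q p))\<^sup>2)
      = (\<Sum>p<n. (\<Sum>q<n. d q * V q p) * cnj (\<Sum>q'<n. d q' * V q' p))"
    unfolding of_real_sum complex_norm_square ..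
  also have "\<dots> = (\<Sum>p<n. \<Sum>q<n. \<Sum>q'<n. d q * cnj (d q') * (V q p * cnj (V q' p)))"
    unfolding cnj_sum sum_product complex_cnj_mult by (simp add: mult_ac)
  also have "\<dots> = (\<Sum>q<n. \<Sum>q'<n. d q * cnj (d q') * (\<Sum>p<n. V q p * cnj (V q' p)))"
    unfolding sum_distrib_left by (subst sum.swap, rule sum.cong[OF refl], rule sum.swap)
  also have "\<dots> = (\<Sum>q<n. \<Sum>q'<n. d q * cnj (d q') * (if q = q' then 1 else 0))"
    using assms by (intro sum.cong refl) auto
  also have "\<dots> = (\<Sum>q<n. d q * cnj (d q))"
    by (simp add: if_distrib cong: if_cong)
  also have "\<dots> = complex_of_real (\<Sum>q<n. (cmod (d q))\<^sup>2)"
    unfolding of_real_sum complex_norm_square ..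
  finally show ?thesis by (simp only: of_real_eq_iff)
qed

definition qnext :: "('a, 'b, complex) fst \<Rightarrow> 'a tsym \<Rightarrow> (nat \<Rightarrow> 'b list \<Rightarrow> complex)
    \<Rightarrow> nat \<Rightarrow> 'b list \<Rightarrow> complex" where
  "qnext T a c = (\<lambda>p u. if halting T p then 0 else qstep T a c p u)"

fun qrun :: "('a, 'b, complex) fst \<Rightarrow> 'a tsym list \<Rightarrow> (nat \<Rightarrow> 'b list \<Rightarrow> complex)
    \<Rightarrow> nat \<Rightarrow> 'b list \<Rightarrow> complex" where
  "qrun T [] c = c"
| "qrun T (a # as) c = qrun T as (qnext T a c)"

definition qnorm :: "('a, 'b, complex) fst \<Rightarrow> 'b list \<Rightarrow> (nat \<Rightarrow> 'b list \<Rightarrow> complex) \<Rightarrow> real" where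
  "qnorm T w c = (\<Sum>q<nstates T. \<Sum>u\<in>set (prefixes w). (cmod (c q u))\<^sup>2)"

definition accept_weight :: "('a, 'b, complex) fst \<Rightarrow> 'a tsym \<Rightarrow> 'b list
    \<Rightarrow> (nat \<Rightarrow> 'b list \<Rightarrow> complex) \<Rightarrow> real" where
  "accept_weight T a w c = (\<Sum>p\<in>acc T. (cmod (qstep T a c p w))\<^sup>2)"

lemma qacc_append: "qacc T (as @ bs) c w = qacc T as c w + qacc T bs (qrun T as c) w"
  by (induction as arbitrary: c) (simp_all add: qnext_def)

lemma qacc_nonneg: "qacc T as c w \<ge> 0"
  by (induction as arbitrary: c) (simp_all add: sum_nonneg)

lemma qrun_append: "qrun T (as @ bs) c = qrun T bs (qrun T as c)"
  by (induction as arbitrary: c) simp_all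

lemma sum_prefixes_strip_suffix_le:
  fixes f :: "'b list \<Rightarrow> real"
  assumes "\<And>u. f u \<ge> 0"
  shows "(\<Sum>u\<in>set (prefixes w). if suffix s u then f (take (length u - length s) u) else 0)
         \<le> (\<Sum>u\<in>set (prefixes w). f u)"
proof -
  define S where "S = {u \<in> set (prefixes w). suffix s u}"
  define g where "g u = take (length u - length s) u" for u :: "'b list"
  have "inj_on g S"
  proof (rule inj_onI)
    fix u u' assume "u \<in> S" "u' \<in> S" "g u = g u'"
    then have "length u - length s = length u' - length s" "prefix u w" "prefix u' w"
      "length s \<le> length u" "length s \<le> length u'"
      unfolding S_def g_def by (auto dest: arg_cong[of _ _ length] suffix_length_le)
    then have "length u = length u'" by linarith
    with \<open>prefix u w\<close> \<open>prefix u' w\<close> show "u = u'"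
      by (metis prefix_length_prefix prefix_order.antisym order_refl)
  qed
  moreover have "g ` S \<subseteq> set (prefixes w)"
    unfolding S_def g_def using take_is_prefix prefix_order.trans by fastforce
  ultimately have reindexed: "(\<Sum>u\<in>S. f (g u)) \<le> (\<Sum>u\<in>set (prefixes w). f u)"
    using assms by (simp add: sum.reindex[symmetric, unfolded comp_def] sum_mono2)
  have "(\<Sum>u\<in>set (prefixes w). if suffix s u then f (g u) else 0) = (\<Sum>u\<in>S. f (g u))"
    unfolding S_def by (rule sum.inter_filter[symmetric]) simp
  with reindexed show ?thesis unfolding g_def by simp
qed

lemma qfst_orthonormal:
  assumes "is_qfst T"
  shows "\<forall>q<nstates T. \<forall>q'<nstates T.
    (\<Sum>p<nstates T. trans T a q p * cnj (trans T a q' p)) = (if q = q' then 1 else 0)"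
  using assms unfolding is_qfst_def by blast

lemma qstep_norm_le:
  assumes "is_qfst T"
  shows "(\<Sum>p<nstates T. \<Sum>u\<in>set (prefixes w). (cmod (qstep T a c p u))\<^sup>2) \<le> qnorm T w c"
proof -
  define d where "d u q = (if suffix (out T a q) u
    then c q (take (length u - length (out T a q)) u) else 0)" for u q
  have qstep_eq: "qstep T a c p u = (\<Sum>q<nstates T. d u q * trans T a q p)" for p u
    unfolding qstep_def d_def by (intro sum.cong refl) simp
  have "(\<Sum>p<nstates T. \<Sum>u\<in>set (prefixes w). (cmod (qstep T a c p u))\<^sup>2)
      = (\<Sum>u\<in>set (prefixes w). \<Sum>p<nstates T. (cmod (\<Sum>q<nstates T. d u q * trans T a q p))\<^sup>2)"
    unfolding qstep_eq by (rule sum.swap)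
  also have "\<dots> = (\<Sum>u\<in>set (prefixes w). \<Sum>q<nstates T. (cmod (d u q))\<^sup>2)"
    by (simp add: orthonormal_rows_preserve_sum_cmod_square[OF qfst_orthonormal[OF assms]])
  also have "\<dots> = (\<Sum>q<nstates T. \<Sum>u\<in>set (prefixes w). (cmod (d u q))\<^sup>2)"
    by (rule sum.swap)
  also have "\<dots> \<le> qnorm T w c"
    unfolding qnorm_def
  proof (rule sum_mono)
    fix q
    show "(\<Sum>u\<in>set (prefixes w). (cmod (d u q))\<^sup>2) \<le> (\<Sum>u\<in>set (prefixes w). (cmod (c q u))\<^sup>2)"
      unfolding d_def if_distrib[of "\<lambda>z. (cmod z)\<^sup>2"] norm_zero power_zero_numeral
      by (rule sum_prefixes_strip_suffix_le) simp
  qed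
  finally show ?thesis .
qed

lemma qnorm_qnext_le:
  assumes "is_qfst T"
  shows "qnorm T w (qnext T a c) \<le> qnorm T w c"
proof -
  have "qnorm T w (qnext T a c)
      \<le> (\<Sum>p<nstates T. \<Sum>u\<in>set (prefixes w). (cmod (qstep T a c p u))\<^sup>2)"
    unfolding qnorm_def qnext_def by (intro sum_mono) auto
  then show ?thesis using qstep_norm_le[OF assms] by (rule order_trans)
qed

lemma qnorm_qrun_le:
  assumes "is_qfst T"
  shows "qnorm T w (qrun T as c) \<le> qnorm T w c"
  by (induction as arbitrary: c) (auto intro: order_trans qnorm_qnext_le[OF assms])

lemma accept_weight_le_qnorm:
  assumes "is_qfst T"
  shows "accept_weight T a w c \<le> qnorm T w c"
proof -
  have "acc T \<subseteq> {..<nstates T}"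
    using assms unfolding is_qfst_def well_formed_def by blast
  then have "accept_weight T a w c \<le> (\<Sum>p<nstates T. (cmod (qstep T a c p w))\<^sup>2)"
    unfolding accept_weight_def by (intro sum_mono2) auto
  also have "\<dots> \<le> (\<Sum>p<nstates T. \<Sum>u\<in>set (prefixes w). (cmod (qstep T a c p u))\<^sup>2)"
    by (intro sum_mono member_le_sum) auto
  also have "\<dots> \<le> qnorm T w c" by (rule qstep_norm_le[OF assms])
  finally show ?thesis .
qed

lemma qstep_add: "qstep T a (\<lambda>q u. c1 q u + c2 q u) p u = qstep T a c1 p u + qstep T a c2 p u"
  unfolding qstep_def by (simp add: sum.distrib[symmetric] algebra_simps if_distrib cong: if_cong)

lemma qstep_diff: "qstep T a (\<lambda>q u. c1 q u - c2 q u) p u = qstep T a c1 p u - qstep T a c2 p u"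
  unfolding qstep_def by (simp add: sum_subtractf[symmetric] algebra_simps if_distrib cong: if_cong)

lemma qrun_add: "qrun T as (\<lambda>q u. c1 q u + c2 q u) = (\<lambda>p u. qrun T as c1 p u + qrun T as c2 p u)"
proof -
  have "qnext T a (\<lambda>q u. c1 q u + c2 q u) = (\<lambda>p u. qnext T a c1 p u + qnext T a c2 p u)"
    for a c1 c2
    unfolding qnext_def by (simp add: qstep_add fun_eq_iff)
  then show ?thesis by (induction as arbitrary: c1 c2) simp_all
qed

lemma qnorm_parallelogram:
  "qnorm T w (\<lambda>q u. a q u + b q u) + qnorm T w (\<lambda>q u. a q u - b q u) = 2 * qnorm T w a + 2 * qnorm T w b"
proof -
  have "(cmod (x + y))\<^sup>2 + (cmod (x - y))\<^sup>2 = 2 * (cmod x)\<^sup>2 + 2 * (cmod y)\<^sup>2" for x y :: complex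
    by (simp only: cmod_power2) (simp add: power2_eq_square algebra_simps)
  then show ?thesis
    unfolding qnorm_def sum.distrib[symmetric] sum_distrib_left by simp
qed

text \<open>A contraction that almost preserves the norms of a and b almost preserves
  the norm of a - b: by the parallelogram law, a loss on a - b would force a gain on a + b.\<close>
lemma qnorm_diff_le_qrun:
  assumes "is_qfst T"
  shows "qnorm T w (\<lambda>q u. a q u - b q u)
    \<le> qnorm T w (\<lambda>q u. qrun T as a q u - qrun T as b q u)
      + 2 * (qnorm T w a - qnorm T w (qrun T as a)) + 2 * (qnorm T w b - qnorm T w (qrun T as b))"
proof -
  have "qnorm T w (\<lambda>q u. qrun T as a q u + qrun T as b q u) \<le> qnorm T w (\<lambda>q u. a q u + b q u)"
    using qnorm_qrun_le[OF assms] by (simp only: qrun_add[symmetric])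
  then show ?thesis
    using qnorm_parallelogram[of T w a b] qnorm_parallelogram[of T w "qrun T as a" "qrun T as b"]
    by argo
qed

lemma square_add_le_weighted:
  fixes x y t :: real
  assumes "t > 0"
  shows "(x + y)\<^sup>2 \<le> (1 + t) * x\<^sup>2 + (1 + 1 / t) * y\<^sup>2"
proof -
  have "(1 + t) * x\<^sup>2 + (1 + 1 / t) * y\<^sup>2 - (x + y)\<^sup>2 = (t * x - y)\<^sup>2 / t"
    using assms by (simp add: field_simps power2_eq_square)
  moreover have "(t * x - y)\<^sup>2 / t \<ge> 0" using assms by simp
  ultimately show ?thesis by linarith
qed

lemma accept_weight_le_weighted:
  assumes "t > 0"
  shows "accept_weight T a w c1
    \<le> (1 + t) * accept_weight T a w c2 + (1 + 1 / t) * accept_weight T a w (\<lambda>q u. c1 q u - c2 q u)"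
proof -
  have "(cmod x)\<^sup>2 \<le> (1 + t) * (cmod y)\<^sup>2 + (1 + 1 / t) * (cmod (x - y))\<^sup>2" for x y :: complex
  proof -
    have "(cmod x)\<^sup>2 \<le> (cmod y + cmod (x - y))\<^sup>2"
      using norm_triangle_ineq[of y "x - y"] by (intro power_mono) auto
    also have "\<dots> \<le> (1 + t) * (cmod y)\<^sup>2 + (1 + 1 / t) * (cmod (x - y))\<^sup>2"
      by (rule square_add_le_weighted[OF assms])
    finally show ?thesis .
  qed
  then show ?thesis
    unfolding accept_weight_def qstep_diff sum_distrib_left sum.distrib[symmetric]
    by (intro sum_mono)
qed

section \<open>Almost norm-minimal vectors recur\<close>

lemma floor_divide_eq_imp_abs_diff_less:
  fixes s t h :: real
  assumes "h > 0" and "\<lfloor>s / h\<rfloor> = \<lfloor>t / h\<rfloor>"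
  shows "\<bar>s - t\<bar> < h"
proof -
  have "\<bar>s / h - t / h\<bar> < 1"
    using assms(2) of_int_floor_le[of "s / h"] of_int_floor_le[of "t / h"]
      real_of_int_floor_add_one_gt[of "s / h"] real_of_int_floor_add_one_gt[of "t / h"]
    by linarith
  then have "\<bar>s - t\<bar> / h < 1"
    using assms(1) by (simp add: diff_divide_distrib[symmetric])
  then show ?thesis using assms(1) by simp
qed

lemma bounded_sequence_close_pair:
  fixes z :: "nat \<Rightarrow> 'i \<Rightarrow> complex"
  assumes "finite I" and bound: "\<And>k x. x \<in> I \<Longrightarrow> cmod (z k x) \<le> B" and "e > 0"
  shows "\<exists>i j. i < j \<and> (\<forall>x\<in>I. cmod (z i x - z j x) < e)"
proof -
  define h where "h = e / 2"
  have "h > 0" using \<open>e > 0\<close> unfolding h_def by simp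
  define cell where "cell t = \<lfloor>t / h\<rfloor>" for t
  define g where "g k = (\<lambda>x\<in>I. (cell (Re (z k x)), cell (Im (z k x))))" for k
  define C where "C = {cell (- B)..cell B}"
  have cell_range: "cell t \<in> C" if "\<bar>t\<bar> \<le> B" for t
    using that \<open>h > 0\<close> unfolding C_def cell_def
    by (auto intro!: floor_mono simp: abs_le_iff field_simps)
  have "g k \<in> I \<rightarrow>\<^sub>E C \<times> C" for k
  proof -
    have "\<bar>Re (z k x)\<bar> \<le> B" "\<bar>Im (z k x)\<bar> \<le> B" if "x \<in> I" for x
      using bound[OF that] abs_Re_le_cmod abs_Im_le_cmod order_trans by blast+
    then show ?thesis unfolding g_def by (simp add: PiE_iff cell_range)
  qed
  then have "finite (range g)"
    using \<open>finite I\<close> by (intro finite_subset[OF _ finite_PiE[of I "\<lambda>_. C \<times> C"]]) (auto simp: C_def)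
  then have "\<not> inj g"
    using finite_imageD infinite_UNIV_nat by blast
  then obtain a b where "a \<noteq> b" and "g a = g b"
    unfolding inj_def by blast
  have close: "cmod (z a x - z b x) < e" if "x \<in> I" for x
  proof -
    have "cell (Re (z a x)) = cell (Re (z b x))" "cell (Im (z a x)) = cell (Im (z b x))"
      using \<open>g a = g b\<close> that unfolding g_def by (metis (mono_tags) prod.inject restrict_apply')+
    then have "\<bar>Re (z a x - z b x)\<bar> < h" "\<bar>Im (z a x - z b x)\<bar> < h"
      using floor_divide_eq_imp_abs_diff_less[OF \<open>h > 0\<close>] unfolding cell_def by auto
    then show ?thesis using cmod_le[of "z a x - z b x"] unfolding h_def by linarith
  qed
  show ?thesis
  proof (cases "a < b")
    case True
    then show ?thesis using close by blast
  next
    case False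
    then have "b < a" using \<open>a \<noteq> b\<close> by simp
    then show ?thesis using close by (metis norm_minus_commute)
  qed
qed

lemma qnorm_nonneg: "qnorm T w c \<ge> 0"
  unfolding qnorm_def by (intro sum_nonneg) auto

lemma cmod_le_sqrt_qnorm:
  assumes "q < nstates T" and "prefix u w"
  shows "cmod (c q u) \<le> sqrt (qnorm T w c)"
proof (rule real_le_rsqrt)
  have "(cmod (c q u))\<^sup>2 \<le> (\<Sum>u\<in>set (prefixes w). (cmod (c q u))\<^sup>2)"
    using assms by (intro member_le_sum) auto
  also have "\<dots> \<le> qnorm T w c"
    unfolding qnorm_def using assms
    by (intro member_le_sum[where f = "\<lambda>q. \<Sum>u\<in>set (prefixes w). (cmod (c q u))\<^sup>2"])
      (auto intro: sum_nonneg)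
  finally show "(cmod (c q u))\<^sup>2 \<le> qnorm T w c" .
qed

definition almost_norm_minimal :: "('a, 'b, complex) fst \<Rightarrow> 'b list \<Rightarrow> real
    \<Rightarrow> (nat \<Rightarrow> 'b list \<Rightarrow> complex) \<Rightarrow> bool" where
  "almost_norm_minimal T w \<eta> c \<longleftrightarrow> (\<forall>v. qnorm T w c - \<eta> \<le> qnorm T w (qrun T (map Sym v) c))"

lemma almost_norm_minimal_qrun:
  assumes "is_qfst T" and "almost_norm_minimal T w \<eta> c"
  shows "almost_norm_minimal T w \<eta> (qrun T (map Sym x) c)"
  unfolding almost_norm_minimal_def
proof
  fix v
  have "qnorm T w c - \<eta> \<le> qnorm T w (qrun T (map Sym (x @ v)) c)"
    using assms(2) unfolding almost_norm_minimal_def by blast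
  then show "qnorm T w (qrun T (map Sym x) c) - \<eta> \<le> qnorm T w (qrun T (map Sym v) (qrun T (map Sym x) c))"
    using qnorm_qrun_le[OF assms(1), of w "map Sym x" c] by (simp add: qrun_append)
qed

lemma exists_almost_norm_minimal_qrun:
  assumes "\<eta> > 0"
  shows "\<exists>y. almost_norm_minimal T w \<eta> (qrun T (map Sym y) c)"
proof -
  define f where "f y = qnorm T w (qrun T (map Sym y) c)" for y
  have bdd: "bdd_below (range f)"
    by (rule bdd_belowI[of _ 0]) (auto simp: f_def qnorm_nonneg)
  obtain y where y: "f y < Inf (range f) + \<eta>"
    using assms cInf_less_iff[OF _ bdd, of "Inf (range f) + \<eta>"] by auto
  have "f y - \<eta> \<le> f (y @ v)" for v
    using cInf_lower[OF _ bdd, of "f (y @ v)"] y by simp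
  then have "almost_norm_minimal T w \<eta> (qrun T (map Sym y) c)"
    unfolding almost_norm_minimal_def f_def by (simp add: qrun_append)
  then show ?thesis ..
qed

text \<open>The iterates of an almost norm-minimal vector under a fixed block z have almost
  equal norms; by compactness two of them are close, and since the evolution barely
  shrinks their difference, the vector is close to one of its own iterates.\<close>
lemma almost_norm_minimal_recurrent:
  assumes "is_qfst T" and "\<eta> > 0" and "almost_norm_minimal T w \<eta> c"
  shows "\<exists>m>0. qnorm T w (\<lambda>q u. c q u - qrun T (map Sym (concat (replicate m z))) c q u) \<le> 5 * \<eta>"
proof -
  define \<phi> where "\<phi> k = qrun T (map Sym (concat (replicate k z))) c" for k
  have \<phi>_shift: "qrun T (map Sym (concat (replicate i z))) (\<phi> m) = \<phi> (m + i)" for m i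
    unfolding \<phi>_def by (simp add: replicate_add qrun_append)
  have \<phi>_le: "qnorm T w (\<phi> k) \<le> qnorm T w c" for k
    unfolding \<phi>_def by (rule qnorm_qrun_le[OF assms(1)])
  have \<phi>_ge: "qnorm T w c - \<eta> \<le> qnorm T w (\<phi> k)" for k
    using assms(3) unfolding almost_norm_minimal_def \<phi>_def by blast
  define I where "I = {..<nstates T} \<times> set (prefixes w)"
  define e where "e = sqrt (\<eta> / (card I + 1))"
  have "finite I" unfolding I_def by simp
  have bound: "cmod (\<phi> k (fst x) (snd x)) \<le> sqrt (qnorm T w c)" if "x \<in> I" for k x
    using that cmod_le_sqrt_qnorm[of "fst x" T "snd x" w "\<phi> k"] \<phi>_le[of k] unfolding I_def
    by (auto intro: order_trans real_sqrt_le_mono)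
  have "e > 0" using assms(2) unfolding e_def by simp
  obtain i j where "i < j"
    and close: "\<forall>x\<in>I. cmod (\<phi> i (fst x) (snd x) - \<phi> j (fst x) (snd x)) < e"
    using bounded_sequence_close_pair[of I "\<lambda>k x. \<phi> k (fst x) (snd x)", OF \<open>finite I\<close> bound \<open>e > 0\<close>]
    by blast
  have "qnorm T w (\<lambda>q u. \<phi> i q u - \<phi> j q u) = (\<Sum>x\<in>I. (cmod (\<phi> i (fst x) (snd x) - \<phi> j (fst x) (snd x)))\<^sup>2)"
    unfolding qnorm_def I_def by (simp add: sum.cartesian_product split_def)
  also have "\<dots> \<le> (\<Sum>x\<in>I. e\<^sup>2)"
    using close by (intro sum_mono power_mono) (auto intro: less_imp_le)
  also have "\<dots> \<le> \<eta>"
    using assms(2) unfolding e_def by (simp add: field_simps)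
  finally have ij_close: "qnorm T w (\<lambda>q u. \<phi> i q u - \<phi> j q u) \<le> \<eta>" .
  define m where "m = j - i"
  have "m > 0" using \<open>i < j\<close> unfolding m_def by simp
  have "\<phi> j = \<phi> (m + i)" using \<open>i < j\<close> unfolding m_def by simp
  also have "\<dots> = qrun T (map Sym (concat (replicate i z))) (\<phi> m)" by (rule \<phi>_shift[symmetric])
  finally have "\<phi> j = qrun T (map Sym (concat (replicate i z))) (\<phi> m)" .
  moreover have "\<phi> i = qrun T (map Sym (concat (replicate i z))) c"
    unfolding \<phi>_def ..
  ultimately have "qnorm T w (\<lambda>q u. c q u - \<phi> m q u)
      \<le> qnorm T w (\<lambda>q u. \<phi> i q u - \<phi> j q u)
        + 2 * (qnorm T w c - qnorm T w (\<phi> i)) + 2 * (qnorm T w (\<phi> m) - qnorm T w (\<phi> j))"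
    using qnorm_diff_le_qrun[OF assms(1), of w c "\<phi> m" "map Sym (concat (replicate i z))"]
    by simp
  then have "qnorm T w (\<lambda>q u. c q u - \<phi> m q u) \<le> 5 * \<eta>"
    using ij_close \<phi>_ge[of i] \<phi>_ge[of j] \<phi>_le[of m] by argo
  with \<open>m > 0\<close> show ?thesis unfolding \<phi>_def by blast
qed

section \<open>Inserting a block barely lowers the acceptance probability\<close>

lemma accept_weight_le_of_qnorm_diff:
  assumes "is_qfst T" and "qnorm T w c2 \<le> 1" and "\<delta> > 0"
    and "qnorm T w (\<lambda>q u. c1 q u - c2 q u) \<le> \<delta>\<^sup>2 / (2 * (\<delta> + 2))"
  shows "accept_weight T a w c1 \<le> accept_weight T a w c2 + \<delta>"
proof -
  define A where "A = accept_weight T a w c2"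
  define E where "E = accept_weight T a w (\<lambda>q u. c1 q u - c2 q u)"
  have "A \<le> 1" using accept_weight_le_qnorm[OF assms(1)] assms(2) unfolding A_def by (rule order_trans)
  then have A_bound: "(1 + \<delta> / 2) * A \<le> A + \<delta> / 2" using assms(3) by (simp add: algebra_simps)
  have "E \<le> \<delta>\<^sup>2 / (2 * (\<delta> + 2))"
    using accept_weight_le_qnorm[OF assms(1)] assms(4) unfolding E_def by (rule order_trans)
  then have "(1 + 1 / (\<delta> / 2)) * E \<le> (1 + 1 / (\<delta> / 2)) * (\<delta>\<^sup>2 / (2 * (\<delta> + 2)))"
    using assms(3) by (intro mult_left_mono) auto
  also have "\<dots> = \<delta> / 2" using assms(3) by (simp add: divide_simps power2_eq_square)
  finally have E_bound: "(1 + 1 / (\<delta> / 2)) * E \<le> \<delta> / 2" .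
  have "accept_weight T a w c1 \<le> (1 + \<delta> / 2) * A + (1 + 1 / (\<delta> / 2)) * E"
    unfolding A_def E_def using assms(3) by (intro accept_weight_le_weighted) simp
  with A_bound E_bound show ?thesis unfolding A_def by linarith
qed

definition qinit :: "('a, 'b, complex) fst \<Rightarrow> nat \<Rightarrow> 'b list \<Rightarrow> complex" where
  "qinit T = (\<lambda>q u. if q = init T \<and> u = [] then 1 else 0)"

lemma qnorm_qinit_le: "qnorm T w (qinit T) \<le> 1"
proof -
  have "qnorm T w (qinit T) = (\<Sum>q<nstates T. \<Sum>u\<in>set (prefixes w). if q = init T \<and> u = [] then 1 else 0)"
    unfolding qnorm_def qinit_def by (intro sum.cong refl) auto
  also have "\<dots> \<le> (\<Sum>q<nstates T. if q = init T then 1 else 0)"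
    by (intro sum_mono) (auto simp: sum.If_cases)
  also have "\<dots> \<le> 1" by (simp add: sum.If_cases)
  finally show ?thesis .
qed

lemma qprob_eq:
  "qprob T w v = qacc T [LEnd] (qinit T) w + qacc T (map Sym v) (qnext T LEnd (qinit T)) w
     + accept_weight T REnd w (qrun T (map Sym v) (qnext T LEnd (qinit T)))"
proof -
  have "tape v = [LEnd] @ map Sym v @ [REnd]" unfolding tape_def by simp
  then show ?thesis
    unfolding qprob_def qinit_def[symmetric]
    by (simp add: qacc_append accept_weight_def qnext_def)
qed

lemma qprob_append_power_ge:
  assumes "is_qfst T" and "\<delta> > 0"
  shows "\<exists>y m. m > 0 \<and> qprob T w (y @ x) - \<delta> \<le> qprob T w (y @ x @ concat (replicate m z))"
proof -
  define s where "s = qnext T LEnd (qinit T)"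
  define B where "B = \<delta>\<^sup>2 / (2 * (\<delta> + 2))"
  define \<eta> where "\<eta> = B / 5"
  have "\<eta> > 0" using assms(2) unfolding \<eta>_def B_def by simp
  then obtain y where "almost_norm_minimal T w \<eta> (qrun T (map Sym y) s)"
    using exists_almost_norm_minimal_qrun by blast
  define c where "c = qrun T (map Sym (y @ x)) s"
  define zs where "zs k = map Sym (concat (replicate k z))" for k
  have "almost_norm_minimal T w \<eta> c"
    using almost_norm_minimal_qrun[OF assms(1) \<open>almost_norm_minimal T w \<eta> _\<close>, of x]
    by (simp add: c_def qrun_append)
  then obtain m where "m > 0" and close: "qnorm T w (\<lambda>q u. c q u - qrun T (zs m) c q u) \<le> 5 * \<eta>"
    using almost_norm_minimal_recurrent[OF assms(1) \<open>\<eta> > 0\<close>] unfolding zs_def by blast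
  have "qnorm T w (qrun T (zs m) c) \<le> 1"
    using qnorm_qrun_le[OF assms(1)] qnorm_qnext_le[OF assms(1)] qnorm_qinit_le
    unfolding c_def s_def by (meson order_trans)
  moreover have "qnorm T w (\<lambda>q u. c q u - qrun T (zs m) c q u) \<le> B"
    using close unfolding \<eta>_def by simp
  ultimately have end_close: "accept_weight T REnd w c \<le> accept_weight T REnd w (qrun T (zs m) c) + \<delta>"
    unfolding B_def by (rule accept_weight_le_of_qnorm_diff[OF assms(1) _ assms(2)])
  define A where "A = qacc T [LEnd] (qinit T) w"
  have "qprob T w (y @ x) = A + qacc T (map Sym (y @ x)) s w + accept_weight T REnd w c"
    unfolding A_def s_def c_def by (rule qprob_eq)
  moreover have "qprob T w (y @ x @ concat (replicate m z))
      = A + qacc T (map Sym (y @ x @ concat (replicate m z))) s w + accept_weight T REnd w (qrun T (zs m) c)"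
    unfolding A_def s_def c_def zs_def qprob_eq by (simp add: qrun_append)
  moreover have "qacc T (map Sym (y @ x)) s w \<le> qacc T (map Sym (y @ x @ concat (replicate m z))) s w"
    using qacc_nonneg by (simp add: qacc_append)
  ultimately have "qprob T w (y @ x) - \<delta> \<le> qprob T w (y @ x @ concat (replicate m z))"
    using end_close by linarith
  with \<open>m > 0\<close> show ?thesis by blast
qed

section \<open>The relation R5\<close>

lemma R5_iff: "(v, w) \<in> R5 \<longleftrightarrow> v \<noteq> [] \<and> w = [last v]"
  unfolding R5_def by (auto, metis append_butlast_last_id)

lemma no_qfst_computes_R5: "\<not> qfst_computes_isolated T R5"
proof
  assume "qfst_computes_isolated T R5"
  then obtain \<alpha> \<epsilon> where T: "is_qfst T" and "\<epsilon> > 0"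
    and accepted: "\<And>v w. (v, w) \<in> R5 \<Longrightarrow> \<alpha> + \<epsilon> \<le> qprob T w v"
    and rejected: "\<And>v w. (v, w) \<notin> R5 \<Longrightarrow> qprob T w v \<le> \<alpha> - \<epsilon>"
    unfolding qfst_computes_isolated_def by blast
  obtain y m where "m > 0" and pumped:
    "qprob T [True] (y @ [True]) - \<epsilon> \<le> qprob T [True] (y @ [True] @ concat (replicate m [False]))"
    using qprob_append_power_ge[OF T \<open>\<epsilon> > 0\<close>] by blast
  have "\<alpha> + \<epsilon> \<le> qprob T [True] (y @ [True])"
    by (rule accepted) (simp add: R5_iff)
  moreover have "qprob T [True] (y @ [True] @ concat (replicate m [False])) \<le> \<alpha> - \<epsilon>"
    by (rule rejected) (use \<open>m > 0\<close> in \<open>simp add: R5_iff last_append\<close>)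
  ultimately show False
    using pumped \<open>\<epsilon> > 0\<close> by linarith
qed

definition bit_state :: "bool \<Rightarrow> nat" where
  "bit_state b = (if b then 2 else 1)"

text \<open>State 0: no letter read yet; state bit_state b: the last letter read was b;
  3 accepts and 4 rejects.\<close>
definition last_letter_dfst :: "(bool, bool, real) fst" where
  "last_letter_dfst = \<lparr> nstates = 5,
     trans = (\<lambda>a q p. case a of
         Sym b \<Rightarrow> (if p = bit_state b then 1 else 0)
       | LEnd \<Rightarrow> (if p = 0 then 1 else 0)
       | REnd \<Rightarrow> (if p = (if q = 1 \<or> q = 2 then 3 else 4) then 1 else 0)),
     out = (\<lambda>a q. case a of
         REnd \<Rightarrow> (if q = 1 then [False] else if q = 2 then [True] else [])
       | _ \<Rightarrow> []),
     init = 0, acc = {3}, rej = {4} \<rparr>"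

lemma last_letter_dfst_simps [simp]:
  "nstates last_letter_dfst = 5" "init last_letter_dfst = 0"
  "acc last_letter_dfst = {3}" "rej last_letter_dfst = {4}"
  "trans last_letter_dfst (Sym b) q p = (if p = bit_state b then 1 else 0)"
  "trans last_letter_dfst LEnd q p = (if p = 0 then 1 else 0)"
  "trans last_letter_dfst REnd q p = (if p = (if q = 1 \<or> q = 2 then 3 else 4) then 1 else 0)"
  "out last_letter_dfst (Sym b) q = []" "out last_letter_dfst LEnd q = []"
  "out last_letter_dfst REnd q = (if q = 1 then [False] else if q = 2 then [True] else [])"
  by (simp_all add: last_letter_dfst_def)

lemma lessThan_5: "{..<5::nat} = {0, 1, 2, 3, 4}" by auto

lemma is_dfst_last_letter_dfst: "is_dfst last_letter_dfst"
  unfolding is_dfst_def is_pfst_def well_formed_def halting_def last_letter_dfst_def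
  by (auto simp: lessThan_5 bit_state_def split: tsym.splits)

definition pconf :: "nat \<Rightarrow> nat \<Rightarrow> bool list \<Rightarrow> real" where
  "pconf s = (\<lambda>p u. if p = s \<and> u = [] then 1 else 0)"

lemma pacc_last_letter_Sym:
  assumes "s < 5"
  shows "pacc last_letter_dfst (Sym b # as) (pconf s) x = pacc last_letter_dfst as (pconf (bit_state b)) x"
proof -
  have "(\<lambda>p u. if halting last_letter_dfst p then 0 else pstep last_letter_dfst (Sym b) (pconf s) p u)
      = pconf (bit_state b)"
    using assms unfolding pstep_def halting_def pconf_def
    by (auto simp: lessThan_5 bit_state_def intro!: ext)
  moreover have "(\<Sum>p\<in>acc last_letter_dfst. pstep last_letter_dfst (Sym b) (pconf s) p x) = 0"
    by (simp add: pstep_def pconf_def lessThan_5 bit_state_def)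
  ultimately show ?thesis by simp
qed

lemma pacc_last_letter_LEnd:
  "pacc last_letter_dfst (LEnd # as) (pconf 0) x = pacc last_letter_dfst as (pconf 0) x"
proof -
  have "(\<lambda>p u. if halting last_letter_dfst p then 0 else pstep last_letter_dfst LEnd (pconf 0) p u)
      = pconf 0"
    unfolding pstep_def halting_def pconf_def by (auto simp: lessThan_5 intro!: ext)
  moreover have "(\<Sum>p\<in>acc last_letter_dfst. pstep last_letter_dfst LEnd (pconf 0) p x) = 0"
    by (simp add: pstep_def pconf_def lessThan_5)
  ultimately show ?thesis by simp
qed

lemma pacc_last_letter_REnd:
  assumes "s \<le> 2"
  shows "pacc last_letter_dfst [REnd] (pconf s) x
    = (if (s = 1 \<and> x = [False]) \<or> (s = 2 \<and> x = [True]) then 1 else 0)"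
  using assms by (simp add: pstep_def pconf_def lessThan_5) (auto simp: suffix_def)

lemma pacc_last_letter_word:
  assumes "s \<le> 2"
  shows "pacc last_letter_dfst (map Sym v @ [REnd]) (pconf s) x
    = pacc last_letter_dfst [REnd] (pconf (if v = [] then s else bit_state (last v))) x"
  using assms
proof (induction v arbitrary: s)
  case Nil
  then show ?case by simp
next
  case (Cons b v)
  have "pacc last_letter_dfst (map Sym (b # v) @ [REnd]) (pconf s) x
      = pacc last_letter_dfst (map Sym v @ [REnd]) (pconf (bit_state b)) x"
    using Cons.prems pacc_last_letter_Sym[of s b "map Sym v @ [REnd]" x] by simp
  also have "\<dots> = pacc last_letter_dfst [REnd]
      (pconf (if v = [] then bit_state b else bit_state (last v))) x"
    by (rule Cons.IH) (simp add: bit_state_def)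
  finally show ?case by simp
qed

lemma last_letter_dfst_computes_R5: "dfst_computes last_letter_dfst R5"
  unfolding dfst_computes_def
proof (intro conjI allI is_dfst_last_letter_dfst)
  fix v w
  have "pprob last_letter_dfst w v = pacc last_letter_dfst (LEnd # map Sym v @ [REnd]) (pconf 0) w"
    unfolding pprob_def tape_def pconf_def by simp
  also have "\<dots> = pacc last_letter_dfst (map Sym v @ [REnd]) (pconf 0) w"
    by (rule pacc_last_letter_LEnd)
  also have "\<dots> = pacc last_letter_dfst [REnd] (pconf (if v = [] then 0 else bit_state (last v))) w"
    by (rule pacc_last_letter_word) simp
  also have "\<dots> = (if (v, w) \<in> R5 then 1 else 0)"
    by (subst pacc_last_letter_REnd) (auto simp: bit_state_def R5_iff)
  finally show "pprob last_letter_dfst w v = (if (v, w) \<in> R5 then 1 else 0)" .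
qed

theorem theorem10:
  shows "\<not> (\<exists>T :: (bool, bool, complex) fst. qfst_computes_isolated T R5) \<and>
         (\<exists>T :: (bool, bool, real) fst. dfst_computes T R5)"
  using no_qfst_computes_R5 last_letter_dfst_computes_R5 by blast

end
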